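(* Suppose Assumptions A1–A4 hold and $(\beta_t)$ is a positive sequence with $\lim_{t\to\infty}\beta_t=\infty$. Let $\bm{X}_t=\{\bm{x}_1,\dots,\bm{x}_t\}$ be the BOKE iterates, with bandwidth $\ell_t$ used at iteration $t$. Then: (i) If $\ell_t\equiv\ell$ is fixed, then $\inf_t h_{\mathcal{X},\bm{X}_t}\le R_\Psi\ell$ almost surely. (ii) There exists a bandwidth sequence $\ell_t\to0$ such that $\inf_t h_{\mathcal{X},\bm{X}_t}=0$ almost surely.
   Context: Standing setup. A1: $\mathcal{X}\subset\mathbb{R}^d$ is compact, convex, with nonempty interior. A2: $f:\mathcal{X}\to\mathbb{R}$ is continuous. A3: the kernel is $k(\bm{x},\bm{x}')=\Psi((\bm{x}-\bm{x}')/\ell)$ with bandwidth $\ell>0$, where $\Psi:\mathbb{R}^d\to[0,\infty)$ has support contained in $B(\bm{0},R_\Psi)$, is continuous at $\bm{0}$, $\Psi(\bm{0})>0$, $\sup\Psi\le M_\Psi$. A4: noises $\varepsilon_t$ independent, zero mean, sub-Gaussian with parameter $\varsigma>0$. For dataset $\bm{D}_t=\{(\bm{x}_i,y_i)\}_{i=1}^t$: $W_t(\bm{x})=\sum_i k(\bm{x},\bm{x}_i)$; $m_t(\bm{x})=\sum_ik(\bm{x},\bm{x}_i)y_i/W_t(\bm{x})$ if $W_t(\bm{x})>0$, else the average of $y_i$ over nearest points $\bm{x}_i$ to $\bm{x}$; $\hat\sigma_t=W_t^{-1/2}$ (with $c/0=\infty$). BOKE: starting from an initial dataset $\bm{D}_{T_0}$,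 for $t\ge T_0$ choose $\bm{x}_{t+1}\in\arg\max_{\bm{x}\in\mathcal{X}}\big(m_t(\bm{x})+\beta_t\hat\sigma_t(\bm{x})\big)$ (kernel quantities computed with bandwidth $\ell_t$), observe $y_{t+1}=f(\bm{x}_{t+1})+\varepsilon_{t+1}$ and add it to the dataset. The fill distance is $h_{\mathcal{X},\bm{X}_t}=\sup_{\bm{x}\in\mathcal{X}}\min_{i\le t}\|\bm{x}-\bm{x}_i\|$. *)

theory Defs
  imports "HOL-Probability.Probability"
begin

definition kern :: "('a::real_normed_vector \<Rightarrow> real) \<Rightarrow> real \<Rightarrow> 'a \<Rightarrow> 'a \<Rightarrow> real" where
  "kern Psi l x x' = Psi (scaleR (1 / l) (x - x'))"

text \<open>Dataset D_t = {(xs i, ys i) | i < t} (0-based indexing).\<close>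
definition Wt :: "('a::real_normed_vector \<Rightarrow> real) \<Rightarrow> real \<Rightarrow> (nat \<Rightarrow> 'a) \<Rightarrow> nat \<Rightarrow> 'a \<Rightarrow> real" where
  "Wt Psi l xs t x = (\<Sum>i<t. kern Psi l x (xs i))"

definition nearest_idx :: "(nat \<Rightarrow> 'a::metric_space) \<Rightarrow> nat \<Rightarrow> 'a \<Rightarrow> nat set" where
  "nearest_idx xs t x = {i. i < t \<and> (\<forall>j<t. dist x (xs i) \<le> dist x (xs j))}"

definition mt :: "('a::real_normed_vector \<Rightarrow> real) \<Rightarrow> real \<Rightarrow> (nat \<Rightarrow> 'a) \<Rightarrow> (nat \<Rightarrow> real) \<Rightarrow> nat \<Rightarrow> 'a \<Rightarrow> real" where
  "mt Psi l xs ys t x =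
     (if Wt Psi l xs t x > 0
      then (\<Sum>i<t. kern Psi l x (xs i) * ys i) / Wt Psi l xs t x
      else (\<Sum>i\<in>nearest_idx xs t x. ys i) / real (card (nearest_idx xs t x)))"

definition sigma_hat :: "('a::real_normed_vector \<Rightarrow> real) \<Rightarrow> real \<Rightarrow> (nat \<Rightarrow> 'a) \<Rightarrow> nat \<Rightarrow> 'a \<Rightarrow> ereal" where
  "sigma_hat Psi l xs t x =
     (if Wt Psi l xs t x > 0 then ereal (1 / sqrt (Wt Psi l xs t x)) else \<infinity>)"

definition acq :: "('a::real_normed_vector \<Rightarrow> real) \<Rightarrow> real \<Rightarrow> real \<Rightarrow> (nat \<Rightarrow> 'a) \<Rightarrow> (nat \<Rightarrow> real) \<Rightarrow> nat \<Rightarrow> 'a \<Rightarrow> ereal" where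
  "acq Psi l beta xs ys t x = ereal (mt Psi l xs ys t x) + ereal beta * sigma_hat Psi l xs t x"

definition boke_run :: "'w measure \<Rightarrow> 'a::real_normed_vector set \<Rightarrow> ('a \<Rightarrow> real) \<Rightarrow> ('a \<Rightarrow> real)
    \<Rightarrow> (nat \<Rightarrow> real) \<Rightarrow> (nat \<Rightarrow> real) \<Rightarrow> nat \<Rightarrow> (nat \<Rightarrow> 'a) \<Rightarrow> (nat \<Rightarrow> 'w \<Rightarrow> real)
    \<Rightarrow> (nat \<Rightarrow> 'w \<Rightarrow> 'a) \<Rightarrow> bool" where
  "boke_run M X f Psi beta ls T0 xinit eps x \<longleftrightarrow>
     (\<forall>\<omega>\<in>space M.
        (\<forall>i<T0. x i \<omega> = xinit i) \<and>
        (\<forall>t\<ge>T0. x t \<omega> \<in> X \<and>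
           (\<forall>z\<in>X. acq Psi (ls t) (beta t) (\<lambda>i. x i \<omega>) (\<lambda>i. f (x i \<omega>) + eps i \<omega>) t z
                 \<le> acq Psi (ls t) (beta t) (\<lambda>i. x i \<omega>) (\<lambda>i. f (x i \<omega>) + eps i \<omega>) t (x t \<omega>))))"

definition fill_distance :: "'a::metric_space set \<Rightarrow> 'a set \<Rightarrow> real" where
  "fill_distance X P = (SUP x\<in>X. infdist x P)"

definition sub_gaussian :: "'w measure \<Rightarrow> ('w \<Rightarrow> real) \<Rightarrow> real \<Rightarrow> bool" where
  "sub_gaussian M e s \<longleftrightarrow>
     (\<forall>lam::real. integrable M (\<lambda>\<omega>. exp (lam * e \<omega>)) \<and>
        (\<integral>\<omega>. exp (lam * e \<omega>) \<partial>M) \<le> exp (lam\<^sup>2 * s\<^sup>2 / 2))"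

end

theory Submission
  imports Defs
begin

(*
  While the design does not cover X at scale R l, some point of X carries zero kernel weight,
  so sigma-hat and hence the acquisition are infinite there.  The maximizer must then carry zero
  weight as well, i.e. it lies at distance at least r l from every earlier point, where Psi is
  positive on the ball of radius r.  By compactness only N points of X can be r l apart, so within
  N + 1 steps of a constant bandwidth l the fill distance falls to R l.  This holds for every
  noise realisation.
  For (ii) the bandwidth is held at 1/(k+1) for N_k + 1 consecutive steps, for each k.
*)

lemma compact_separated_card_bounded:
  fixes X :: "'a::metric_space set"
  assumes "compact X" "e > 0"
  shows "\<exists>N. \<forall>S. S \<subseteq> X \<longrightarrow> pairwise (\<lambda>x y. e \<le> dist x y) S \<longrightarrow> card S \<le> N"
proof -
  obtain C where C: "finite C" "X \<subseteq> (\<Union>c\<in>C. ball c (e/2))"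
    using assms compact_eq_totally_bounded[of X] by (meson half_gt_zero)
  have "card S \<le> card C" if S: "S \<subseteq> X" "pairwise (\<lambda>x y. e \<le> dist x y) S" for S
  proof -
    define centre where "centre s = (SOME c. c \<in> C \<and> s \<in> ball c (e/2))" for s
    have centre: "centre s \<in> C \<and> dist (centre s) s < e/2" if "s \<in> S" for s
      unfolding centre_def using someI_ex[of "\<lambda>c. c \<in> C \<and> s \<in> ball c (e/2)"] C(2) S(1) that
      by fastforce
    have "inj_on centre S"
    proof (rule inj_onI, rule ccontr)
      fix x y assume xy: "x \<in> S" "y \<in> S" "centre x = centre y" "x \<noteq> y"
      have "dist x y \<le> dist (centre x) x + dist (centre y) y"
        using xy(3) dist_triangle3 by metis
      also have "\<dots> < e" using centre[OF xy(1)] centre[OF xy(2)] by linarith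
      moreover have "e \<le> dist x y" using S(2) xy(1,2,4) by (auto simp: pairwise_def)
      ultimately show False by linarith
    qed
    then show ?thesis using centre C(1) by (intro card_inj_on_le) auto
  qed
  then show ?thesis by blast
qed

lemma fill_distance_le:
  assumes "X \<noteq> {}" "\<And>z. z \<in> X \<Longrightarrow> \<exists>p\<in>P. dist z p \<le> B"
  shows "fill_distance X P \<le> B"
  unfolding fill_distance_def
proof (rule cSUP_least[OF assms(1)])
  fix z assume "z \<in> X"
  then obtain p where "p \<in> P" "dist z p \<le> B" using assms(2) by blast
  then show "infdist z P \<le> B" using infdist_le[of p P z] by linarith
qed

lemma fill_distance_nonneg:
  assumes "compact X" "X \<noteq> {}"
  shows "fill_distance X P \<ge> 0"
proof -
  obtain z where z: "z \<in> X" using assms(2) by blast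
  have "bounded ((\<lambda>x. infdist x P) ` X)"
    by (intro compact_imp_bounded compact_continuous_image assms(1) continuous_at_imp_continuous_on
        ballI continuous_infdist continuous_ident)
  then have "infdist z P \<le> fill_distance X P"
    unfolding fill_distance_def using z by (intro cSUP_upper bounded_imp_bdd_above)
  then show ?thesis using infdist_nonneg[of z P] by linarith
qed

lemma INF_fill_distance_nonneg:
  fixes xs :: "nat \<Rightarrow> 'a::metric_space"
  assumes "compact X" "X \<noteq> {}"
  shows "(INF t\<in>{1..}. fill_distance X (xs ` {..<t})) \<ge> 0"
  using fill_distance_nonneg[OF assms] by (intro cINF_greatest) auto

lemma INF_fill_distance_le:
  fixes xs :: "nat \<Rightarrow> 'a::metric_space"
  assumes "compact X" "X \<noteq> {}" "1 \<le> t" "fill_distance X (xs ` {..<t}) \<le> B"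
  shows "(INF t\<in>{1..}. fill_distance X (xs ` {..<t})) \<le> B"
proof -
  have "(INF t\<in>{1..}. fill_distance X (xs ` {..<t})) \<le> fill_distance X (xs ` {..<t})"
    using assms(3) fill_distance_nonneg[OF assms(1,2)] by (intro cINF_lower bdd_belowI2) auto
  then show ?thesis using assms(4) by linarith
qed

definition maximizes_acq ::
    "('a::real_normed_vector \<Rightarrow> real) \<Rightarrow> 'a set \<Rightarrow> real \<Rightarrow> real \<Rightarrow> (nat \<Rightarrow> 'a) \<Rightarrow> (nat \<Rightarrow> real)
     \<Rightarrow> nat \<Rightarrow> bool" where
  "maximizes_acq Psi X l b xs ys t \<longleftrightarrow>
     xs t \<in> X \<and> (\<forall>z\<in>X. acq Psi l b xs ys t z \<le> acq Psi l b xs ys t (xs t))"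

lemma boke_run_maximizes_acq:
  assumes "boke_run M X f Psi beta ls T0 xinit eps x" "\<omega> \<in> space M" "T0 \<le> t"
  shows "maximizes_acq Psi X (ls t) (beta t) (\<lambda>i. x i \<omega>) (\<lambda>i. f (x i \<omega>) + eps i \<omega>) t"
  using assms unfolding boke_run_def maximizes_acq_def by blast

lemma acq_eq_infinity_iff:
  "b > 0 \<Longrightarrow> acq Psi l b xs ys t z = \<infinity> \<longleftrightarrow> \<not> Wt Psi l xs t z > 0"
  by (simp add: acq_def sigma_hat_def)

lemma dist_le_if_kern_nonzero:
  assumes "{z. Psi z \<noteq> 0} \<subseteq> cball 0 R" "l > 0" "kern Psi l z p \<noteq> 0"
  shows "dist z p \<le> R * l"
proof -
  have "norm (scaleR (1/l) (z - p)) \<le> R"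
    using assms(1,3) by (auto simp: kern_def)
  then show ?thesis using assms(2) by (simp add: dist_norm divide_le_eq)
qed

lemma kern_eq_zero_if_Wt_nonpos:
  assumes "\<forall>z. 0 \<le> Psi z" "\<not> Wt Psi l xs t x > 0" "i < t"
  shows "kern Psi l x (xs i) = 0"
proof -
  have "Wt Psi l xs t x \<ge> 0"
    using assms(1) unfolding Wt_def kern_def by (simp add: sum_nonneg)
  then have "Wt Psi l xs t x = 0"
    using assms(2) by linarith
  then show ?thesis
    using assms(1,3) sum_nonneg_eq_0_iff[of "{..<t}" "\<lambda>i. kern Psi l x (xs i)"]
    unfolding Wt_def kern_def by auto
qed

lemma fill_distance_le_if_Wt_pos:
  assumes "X \<noteq> {}" "{z. Psi z \<noteq> 0} \<subseteq> cball 0 R" "l > 0" "\<forall>z\<in>X. Wt Psi l xs t z > 0"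
  shows "fill_distance X (xs ` {..<t}) \<le> R * l"
proof (rule fill_distance_le[OF assms(1)])
  fix z assume "z \<in> X"
  then obtain i where "i < t" "kern Psi l z (xs i) \<noteq> 0"
    using assms(4) unfolding Wt_def by (metis less_irrefl lessThan_iff sum.neutral)
  then show "\<exists>p\<in>xs ` {..<t}. dist z p \<le> R * l"
    using dist_le_if_kern_nonzero[OF assms(2,3)] by blast
qed

lemma maximizes_acq_separated:
  assumes Psi: "\<forall>z. 0 \<le> Psi z" "{z. Psi z \<noteq> 0} \<subseteq> cball 0 R"
    and r: "\<forall>y. norm y < r \<longrightarrow> Psi y \<noteq> 0"
    and "X \<noteq> {}" "l > 0" "b > 0"
    and max: "maximizes_acq Psi X l b xs ys t"
    and uncovered: "R * l < fill_distance X (xs ` {..<t})"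
    and "i < t"
  shows "r * l \<le> dist (xs t) (xs i)"
proof -
  obtain z where "z \<in> X" "\<not> Wt Psi l xs t z > 0"
    using fill_distance_le_if_Wt_pos[OF \<open>X \<noteq> {}\<close> Psi(2) \<open>l > 0\<close>] uncovered by fastforce
  then have "acq Psi l b xs ys t z = \<infinity>"
    using acq_eq_infinity_iff[OF \<open>b > 0\<close>] by blast
  then have "acq Psi l b xs ys t (xs t) = \<infinity>"
    using max \<open>z \<in> X\<close> unfolding maximizes_acq_def by (metis ereal_infty_less_eq(1))
  then have "kern Psi l (xs t) (xs i) = 0"
    using kern_eq_zero_if_Wt_nonpos[OF Psi(1) _ \<open>i < t\<close>] acq_eq_infinity_iff[OF \<open>b > 0\<close>] by blast
  then have "\<not> norm (scaleR (1/l) (xs t - xs i)) < r"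
    using r unfolding kern_def by blast
  then have "r \<le> norm (scaleR (1/l) (xs t - xs i))"
    by linarith
  then show ?thesis using \<open>l > 0\<close> by (simp add: dist_norm le_divide_eq)
qed

lemma maximizes_acq_fill_distance_le:
  assumes X: "X \<noteq> {}"
    and Psi: "\<forall>z. 0 \<le> Psi z" "{z. Psi z \<noteq> 0} \<subseteq> cball 0 R"
    and r: "r > 0" "\<forall>y. norm y < r \<longrightarrow> Psi y \<noteq> 0"
    and "l > 0"
    and max: "\<forall>t\<in>{a..a+N}. beta t > 0 \<and> maximizes_acq Psi X l (beta t) xs ys t"
    and N: "\<And>S. S \<subseteq> X \<Longrightarrow> pairwise (\<lambda>x y. r * l \<le> dist x y) S \<Longrightarrow> card S \<le> N"
  shows "\<exists>t\<in>{a..a+N}. fill_distance X (xs ` {..<t}) \<le> R * l"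
proof (rule ccontr)
  assume never_covered: "\<not> ?thesis"
  have separated_from_earlier: "r * l \<le> dist (xs t) (xs i)" if "t \<in> {a..a+N}" "i < t" for t i
  proof -
    have "beta t > 0" "maximizes_acq Psi X l (beta t) xs ys t" using max that(1) by blast+
    moreover have "R * l < fill_distance X (xs ` {..<t})" using never_covered that(1) by force
    ultimately show ?thesis using maximizes_acq_separated[OF Psi r(2) X \<open>l > 0\<close>] that(2) by blast
  qed
  have separated: "r * l \<le> dist (xs i) (xs j)" if "i \<in> {a..a+N}" "j \<in> {a..a+N}" "i \<noteq> j" for i j
    using separated_from_earlier[of i j] separated_from_earlier[of j i] that
    by (cases "i < j") (auto simp: dist_commute)
  have "inj_on xs {a..a+N}"
  proof (rule inj_onI, rule ccontr)
    fix i j assume "i \<in> {a..a+N}" "j \<in> {a..a+N}" "xs i = xs j" "i \<noteq> j"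
    then have "r * l \<le> 0" using separated by fastforce
    then show False using \<open>r > 0\<close> \<open>l > 0\<close> by (simp add: mult_le_0_iff)
  qed
  then have "card (xs ` {a..a+N}) = N + 1"
    by (simp add: card_image)
  moreover have "xs ` {a..a+N} \<subseteq> X"
    using max unfolding maximizes_acq_def by blast
  moreover have "pairwise (\<lambda>x y. r * l \<le> dist x y) (xs ` {a..a+N})"
    using separated by (intro pairwise_imageI) auto
  ultimately show False using N[of "xs ` {a..a+N}"] by linarith
qed

text \<open>Blocks of lengths N k + 1 are laid end to end from T0, and the bandwidth on block k is
  1/(k+1); c t counts the blocks that are complete before time t.\<close>
lemma bandwidth_schedule_exists:
  fixes N :: "nat \<Rightarrow> nat" and T0 :: nat
  obtains ls :: "nat \<Rightarrow> real"
  where "\<forall>t. ls t > 0" "ls \<longlonglongrightarrow> 0" "\<And>k. \<exists>a\<ge>T0. \<forall>t\<in>{a..a + N k}. ls t = inverse (real (Suc k))"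
proof -
  define s where "s = rec_nat T0 (\<lambda>k a. a + N k + 1)"
  have s_Suc: "s (Suc k) = s k + N k + 1" for k by (simp add: s_def)
  have "strict_mono s" by (rule strict_monoI_Suc) (simp add: s_Suc)
  then have s_mono: "s i \<le> s j \<longleftrightarrow> i \<le> j" for i j by (rule strict_mono_less_eq)
  have s_ge: "s 0 \<le> s k" for k using s_mono by simp
  define c where "c t = card {j. s (Suc j) \<le> t}" for t
  have finite: "finite {j. s (Suc j) \<le> t}" for t
  proof (rule finite_subset)
    show "{j. s (Suc j) \<le> t} \<subseteq> {..<t}"
    proof
      fix j assume "j \<in> {j. s (Suc j) \<le> t}"
      then show "j \<in> {..<t}"
        using strict_mono_imp_increasing[OF \<open>strict_mono s\<close>, of "Suc j"] by simp
    qed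
  qed simp
  have c_ge: "k \<le> c t" if "s k \<le> t" for k t
  proof -
    have "s (Suc j) \<le> t" if "j < k" for j
      using that \<open>s k \<le> t\<close> s_mono[of "Suc j" k] by simp
    then have "{..<k} \<subseteq> {j. s (Suc j) \<le> t}" by blast
    then show ?thesis unfolding c_def using card_mono[OF finite] by (metis card_lessThan)
  qed
  have c_eq: "c t = k" if "t \<in> {s k..s k + N k}" for k t
  proof -
    have "s (Suc j) \<le> t \<longleftrightarrow> j < k" for j
    proof
      assume "s (Suc j) \<le> t"
      then have "s (Suc j) < s (Suc k)" using that s_Suc by simp
      then show "j < k" using s_mono[of "Suc k" "Suc j"] by linarith
    next
      assume "j < k"
      then show "s (Suc j) \<le> t" using that s_mono[of "Suc j" k] by simp
    qed
    then have "{j. s (Suc j) \<le> t} = {..<k}" by auto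
    then show ?thesis unfolding c_def by simp
  qed
  have "filterlim c at_top sequentially"
    unfolding filterlim_at_top eventually_sequentially using c_ge by blast
  then have "(\<lambda>t. inverse (real (Suc (c t)))) \<longlonglongrightarrow> 0"
    by (rule filterlim_compose[OF LIMSEQ_inverse_real_of_nat])
  moreover have "\<exists>a\<ge>T0. \<forall>t\<in>{a..a + N k}. inverse (real (Suc (c t))) = inverse (real (Suc k))" for k
    using c_eq s_ge by (intro exI[of _ "s k"]) (simp add: s_def)
  ultimately show thesis by (intro that) auto
qed

lemma boke_run_INF_fill_distance_le:
  assumes X: "compact X" "X \<noteq> {}"
    and Psi: "\<forall>z. 0 \<le> Psi z" "{z. Psi z \<noteq> 0} \<subseteq> cball 0 R"
    and r: "r > 0" "\<forall>y. norm y < r \<longrightarrow> Psi y \<noteq> 0"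
    and beta: "\<forall>t. beta t > 0"
    and run: "boke_run M X f Psi beta ls T0 xinit eps x" "\<omega> \<in> space M"
    and block: "1 \<le> T0" "T0 \<le> a" "l > 0" "\<forall>t\<in>{a..a+N}. ls t = l"
    and N: "\<And>S. S \<subseteq> X \<Longrightarrow> pairwise (\<lambda>x y. r * l \<le> dist x y) S \<Longrightarrow> card S \<le> N"
  shows "(INF t\<in>{1..}. fill_distance X ((\<lambda>i. x i \<omega>) ` {..<t})) \<le> R * l"
proof -
  have "\<forall>t\<in>{a..a+N}. beta t > 0 \<and>
          maximizes_acq Psi X l (beta t) (\<lambda>i. x i \<omega>) (\<lambda>i. f (x i \<omega>) + eps i \<omega>) t"
    using beta block boke_run_maximizes_acq[OF run] by fastforce
  then obtain t where "t \<in> {a..a+N}" and "fill_distance X ((\<lambda>i. x i \<omega>) ` {..<t}) \<le> R * l"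
    using maximizes_acq_fill_distance_le[OF X(2) Psi r \<open>l > 0\<close> _ N] by blast
  moreover have "1 \<le> t" using \<open>t \<in> {a..a+N}\<close> block by simp
  ultimately show ?thesis
    using INF_fill_distance_le[OF X] by blast
qed

lemma boke_run_INF_fill_distance_eq_0:
  assumes X: "compact X" "X \<noteq> {}"
    and Psi: "\<forall>z. 0 \<le> Psi z" "{z. Psi z \<noteq> 0} \<subseteq> cball 0 R"
    and r: "r > 0" "\<forall>y. norm y < r \<longrightarrow> Psi y \<noteq> 0"
    and beta: "\<forall>t. beta t > 0"
    and run: "boke_run M X f Psi beta ls T0 xinit eps x" "\<omega> \<in> space M"
    and "1 \<le> T0"
    and N: "\<And>k S. S \<subseteq> X \<Longrightarrow> pairwise (\<lambda>x y. r * inverse (real (Suc k)) \<le> dist x y) S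
                  \<Longrightarrow> card S \<le> N k"
    and blocks: "\<And>k. \<exists>a\<ge>T0. \<forall>t\<in>{a..a + N k}. ls t = inverse (real (Suc k))"
  shows "(INF t\<in>{1..}. fill_distance X ((\<lambda>i. x i \<omega>) ` {..<t})) = 0"
proof -
  let ?I = "INF t\<in>{1..}. fill_distance X ((\<lambda>i. x i \<omega>) ` {..<t})"
  have "?I \<le> R * inverse (real (Suc k))" for k
  proof -
    obtain a where "T0 \<le> a" "\<forall>t\<in>{a..a + N k}. ls t = inverse (real (Suc k))"
      using blocks[of k] by blast
    then show ?thesis
      using boke_run_INF_fill_distance_le[OF X Psi r beta run \<open>1 \<le> T0\<close> _ _ _ N] by simp
  qed
  moreover have "(\<lambda>k. R * inverse (real (Suc k))) \<longlonglongrightarrow> 0"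
    using tendsto_mult_right_zero[OF LIMSEQ_inverse_real_of_nat] .
  ultimately have "?I \<le> 0"
    by (intro LIMSEQ_le[OF tendsto_const]) auto
  then show ?thesis using INF_fill_distance_nonneg[OF X] by (simp add: eq_iff)
qed

theorem mainTheorem4:
  fixes X :: "'a::euclidean_space set"
    and f Psi :: "'a \<Rightarrow> real"
    and R M_Psi vs :: real
    and beta :: "nat \<Rightarrow> real"
    and M :: "'w measure"
    and eps :: "nat \<Rightarrow> 'w \<Rightarrow> real"
    and T0 :: nat
    and xinit :: "nat \<Rightarrow> 'a"
  assumes A1: "compact X" "convex X" "interior X \<noteq> {}"
    and A2: "continuous_on X f"
    and A3: "\<forall>z. 0 \<le> Psi z" "{z. Psi z \<noteq> 0} \<subseteq> cball 0 R" "isCont Psi 0"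
            "Psi 0 > 0" "\<forall>z. Psi z \<le> M_Psi"
    and A4: "prob_space M" "prob_space.indep_vars M (\<lambda>_. borel) eps UNIV"
            "\<forall>t. integrable M (eps t) \<and> (\<integral>\<omega>. eps t \<omega> \<partial>M) = 0"
            "vs > 0" "\<forall>t. sub_gaussian M (eps t) vs"
    and beta: "\<forall>t. beta t > 0" "filterlim beta at_top sequentially"
    and init: "T0 \<ge> 1" "\<forall>i<T0. xinit i \<in> X"
  shows
    "(\<forall>l>0. \<forall>x. boke_run M X f Psi beta (\<lambda>_. l) T0 xinit eps x \<longrightarrow>
        (AE \<omega> in M. (INF t\<in>{1..}. fill_distance X ((\<lambda>i. x i \<omega>) ` {..<t})) \<le> R * l))
     \<and>
     (\<exists>ls. (\<forall>t. ls t > 0) \<and> ls \<longlonglongrightarrow> 0 \<and>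
        (\<forall>x. boke_run M X f Psi beta ls T0 xinit eps x \<longrightarrow>
          (AE \<omega> in M. (INF t\<in>{1..}. fill_distance X ((\<lambda>i. x i \<omega>) ` {..<t})) = 0)))"
proof -
  have X: "compact X" "X \<noteq> {}" using A1(1) init by auto
  obtain r where r: "r > 0" "\<forall>y. norm y < r \<longrightarrow> Psi y \<noteq> 0"
    using continuous_at_avoid[OF A3(3), of 0] A3(4) by (force simp: dist_0_norm)
  have "\<forall>k. \<exists>N. \<forall>S. S \<subseteq> X \<longrightarrow> pairwise (\<lambda>x y. r * inverse (real (Suc k)) \<le> dist x y) S
                      \<longrightarrow> card S \<le> N"
    using compact_separated_card_bounded[OF X(1)] r(1) by simp
  then obtain N where N: "\<And>k S. S \<subseteq> X \<Longrightarrow> pairwise (\<lambda>x y. r * inverse (real (Suc k)) \<le> dist x y) S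
                            \<Longrightarrow> card S \<le> N k"
    by (metis choice)
  obtain ls where ls: "\<forall>t. ls t > 0" "ls \<longlonglongrightarrow> 0"
    and blocks: "\<And>k. \<exists>a\<ge>T0. \<forall>t\<in>{a..a + N k}. ls t = inverse (real (Suc k))"
    using bandwidth_schedule_exists[of T0 N] by blast
  have "AE \<omega> in M. (INF t\<in>{1..}. fill_distance X ((\<lambda>i. x i \<omega>) ` {..<t})) \<le> R * l"
    if "l > 0" "boke_run M X f Psi beta (\<lambda>_. l) T0 xinit eps x" for l x
  proof -
    obtain N where N: "\<And>S. S \<subseteq> X \<Longrightarrow> pairwise (\<lambda>x y. r * l \<le> dist x y) S \<Longrightarrow> card S \<le> N"
      using compact_separated_card_bounded[OF X(1)] r(1) \<open>l > 0\<close> by (metis mult_pos_pos)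
    show ?thesis
      using boke_run_INF_fill_distance_le[OF X A3(1,2) r beta(1) that(2) _ init(1) order_refl \<open>l > 0\<close> _ N]
      by (intro AE_I2) simp
  qed
  moreover have "AE \<omega> in M. (INF t\<in>{1..}. fill_distance X ((\<lambda>i. x i \<omega>) ` {..<t})) = 0"
    if "boke_run M X f Psi beta ls T0 xinit eps x" for x
    using boke_run_INF_fill_distance_eq_0[OF X A3(1,2) r beta(1) that _ init(1) N blocks] by (intro AE_I2)
  ultimately show ?thesis using ls by blast
qed

end
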